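(* Let $\mathbb K$ be a field of characteristic zero and $A=\bigoplus_{i=1}^k M_{d_i}(\mathbb K)$. Let $\epsilon_0:=\bigoplus_i d_i\mathrm{Tr}_{M_{d_i}}$ (the Frobenius linear form of the unique symmetric special Frobenius structure on $A$) and, for an invertible $u=\bigoplus_i u_i\in A$, consider the twisted Frobenius structure $(a,b)_u:=\epsilon_0(uab)$. Then its F-dimension and F-Hilbert series are $$\dim_1(A)=\sum_{i=1}^k\mathrm{Tr}(u_i)\mathrm{Tr}(u_i^{-1}),\qquad \dim_x(A)=\sum_{i=1}^k\frac{d_i\mathrm{Tr}(u_i)}{1-d_i^{-1}\mathrm{Tr}(u_i^{-1})x},$$ its counit scale factor is $\dim_0(A)=\sum_i d_i\mathrm{Tr}(u_i)$, and it is quasispecial with scale factor $\lambda$ if and only if $\mathrm{Tr}(u_i^{-1})/d_i=\lambda$ for all $i$.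
   Context: A Frobenius algebra is a unital $\mathbb K$-algebra $A$ with a bilinear form $(\ ,\ )$ satisfying $(ab,c)=(a,bc)$ whose induced map $A\to A^*$ is invertible; its inverse is $g=\sum g^1\otimes g^2\in A\otimes A$ with $\sum (a,g^1)g^2=a=\sum g^1(g^2,a)$. Write $\epsilon(a):=(1,a)$ and $\ell:=\sum g^1g^2$. F-dimensions: $\dim_j(A):=\epsilon(\ell^j)$, $\dim_x(A):=\sum_{j\ge0}x^j\dim_j(A)$ (formal power series). Quasispecial with scale factor $\lambda$ means $\ell=\lambda1$ with $\lambda\ne0$; special means $\ell=1$. *)

theory Defs
  imports "Jordan_Normal_Form.Matrix" "HOL-Computational_Algebra.Formal_Power_Series"
begin

definition mat_tr :: "'a::comm_ring_1 mat \<Rightarrow> 'a" where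
  "mat_tr M = (\<Sum>i<dim_row M. M $$ (i, i))"

text \<open>The algebra A = M_{d_1}(K) (+) ... (+) M_{d_k}(K), with ds = [d_1,...,d_k];
  elements are lists of matrices [a_1,...,a_k] with a_i a d_i x d_i matrix.\<close>
definition blk_carrier :: "nat list \<Rightarrow> 'a::comm_ring_1 mat list set" where
  "blk_carrier ds = {a. length a = length ds \<and>
      (\<forall>i<length ds. a ! i \<in> carrier_mat (ds ! i) (ds ! i))}"

definition blk_mult :: "'a::comm_ring_1 mat list \<Rightarrow> 'a mat list \<Rightarrow> 'a mat list" where
  "blk_mult a b = map2 (*) a b"

definition blk_add :: "'a::comm_ring_1 mat list \<Rightarrow> 'a mat list \<Rightarrow> 'a mat list" where
  "blk_add a b = map2 (+) a b"

definition blk_smult :: "'a::comm_ring_1 \<Rightarrow> 'a mat list \<Rightarrow> 'a mat list" where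
  "blk_smult c a = map (\<lambda>m. c \<cdot>\<^sub>m m) a"

definition blk_zero :: "nat list \<Rightarrow> 'a::comm_ring_1 mat list" where
  "blk_zero ds = map (\<lambda>d. 0\<^sub>m d d) ds"

definition blk_one :: "nat list \<Rightarrow> 'a::comm_ring_1 mat list" where
  "blk_one ds = map (\<lambda>d. 1\<^sub>m d) ds"

definition blk_sum :: "nat list \<Rightarrow> 'a::comm_ring_1 mat list list \<Rightarrow> 'a mat list" where
  "blk_sum ds xs = foldr blk_add xs (blk_zero ds)"

definition blk_pow :: "nat list \<Rightarrow> 'a::comm_ring_1 mat list \<Rightarrow> nat \<Rightarrow> 'a mat list" where
  "blk_pow ds a j = ((blk_mult a) ^^ j) (blk_one ds)"

definition eps0 :: "nat list \<Rightarrow> 'a::comm_ring_1 mat list \<Rightarrow> 'a" where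
  "eps0 ds a = (\<Sum>i<length ds. of_nat (ds ! i) * mat_tr (a ! i))"

definition twisted_form :: "nat list \<Rightarrow> 'a::comm_ring_1 mat list \<Rightarrow>
    'a mat list \<Rightarrow> 'a mat list \<Rightarrow> 'a" where
  "twisted_form ds u a b = eps0 ds (blk_mult u (blk_mult a b))"

text \<open>A copairing g = sum_j x_j (x) y_j in A (x) A (given as a finite list of pairs)
  inverting the form B: sum (a,g^1) g^2 = a = sum g^1 (g^2,a) for all a in A.\<close>
definition is_copairing :: "nat list \<Rightarrow> ('a::comm_ring_1 mat list \<Rightarrow> 'a mat list \<Rightarrow> 'a) \<Rightarrow>
    ('a mat list \<times> 'a mat list) list \<Rightarrow> bool" where
  "is_copairing ds B g \<longleftrightarrow>
     (\<forall>(x, y) \<in> set g. x \<in> blk_carrier ds \<and> y \<in> blk_carrier ds) \<and>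
     (\<forall>a \<in> blk_carrier ds.
        blk_sum ds (map (\<lambda>(x, y). blk_smult (B a x) y) g) = a \<and>
        blk_sum ds (map (\<lambda>(x, y). blk_smult (B y a) x) g) = a)"

definition copairing_ell :: "nat list \<Rightarrow> ('a::comm_ring_1 mat list \<times> 'a mat list) list \<Rightarrow> 'a mat list" where
  "copairing_ell ds g = blk_sum ds (map (\<lambda>(x, y). blk_mult x y) g)"

definition F_dim :: "nat list \<Rightarrow> ('a::comm_ring_1 mat list \<Rightarrow> 'a mat list \<Rightarrow> 'a) \<Rightarrow>
    ('a mat list \<times> 'a mat list) list \<Rightarrow> nat \<Rightarrow> 'a" where
  "F_dim ds B g j = B (blk_one ds) (blk_pow ds (copairing_ell ds g) j)"

definition F_hilbert :: "nat list \<Rightarrow> ('a::comm_ring_1 mat list \<Rightarrow> 'a mat list \<Rightarrow> 'a) \<Rightarrow>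
    ('a mat list \<times> 'a mat list) list \<Rightarrow> 'a fps" where
  "F_hilbert ds B g = Abs_fps (F_dim ds B g)"

definition quasispecial :: "nat list \<Rightarrow> ('a::comm_ring_1 mat list \<times> 'a mat list) list \<Rightarrow> 'a \<Rightarrow> bool" where
  "quasispecial ds g lam \<longleftrightarrow> lam \<noteq> 0 \<and> copairing_ell ds g = blk_smult lam (blk_one ds)"

end

theory Submission
  imports Defs
begin

(* In terms of matrix units
   E_pq, the element d_i^-1 v_i E_qp of block i represents the entry functional x |-> (x_i)_pq from
   the left, and d_i^-1 E_qp v_i represents it from the right; pairing the latter with the matrix
   units gives an explicit copairing. For an arbitrary copairing g, the identity
   sum (h, g^1) g^2 = h applied to the left representatives h computes ell = sum g^1 g^2 entrywise:
   it is the central element (tr(v_i) / d_i)_i, whatever g is. Hence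
   dim_j = sum_i d_i tr(u_i) (tr(v_i) / d_i)^j is a sum of geometric sequences, and all four
   claims follow. *)

lemma sum_list_sum_swap:
  "(\<Sum>x\<leftarrow>xs. \<Sum>q\<in>A. f x q) = (\<Sum>q\<in>A. \<Sum>x\<leftarrow>xs. f x q)"
  by (induction xs) (simp_all add: sum.distrib)

lemma sum_list_concat_map: "(\<Sum>x\<leftarrow>concat xss. f x) = (\<Sum>xs\<leftarrow>xss. \<Sum>x\<leftarrow>xs. f x)"
  by (induction xss) auto

lemma sum_delta_pair:
  fixes s t n m :: nat
  assumes "s < n" "t < m"
  shows "(\<Sum>p<n. \<Sum>q<m. if s = p \<and> t = q then f p q else 0) = f s t"
proof -
  have "(\<Sum>p<n. \<Sum>q<m. if s = p \<and> t = q then f p q else 0) = (\<Sum>p<n. if s = p then f p t else 0)"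
    using assms(2) by (intro sum.cong) (auto simp: sum.delta')
  then show ?thesis
    using assms(1) by simp
qed

section \<open>Traces and matrix units\<close>

lemma index_mult_mat_sum:
  assumes "A \<in> carrier_mat n m" "B \<in> carrier_mat m k" "i < n" "j < k"
  shows "(A * B) $$ (i, j) = (\<Sum>l<m. A $$ (i, l) * B $$ (l, j))"
  using assms by (simp add: scalar_prod_def atLeast0LessThan)

lemma mat_tr_mult_comm:
  assumes "A \<in> carrier_mat n m" "B \<in> carrier_mat m n"
  shows "mat_tr (A * B) = mat_tr (B * A)"
proof -
  have "mat_tr (A * B) = (\<Sum>i<n. \<Sum>l<m. A $$ (i, l) * B $$ (l, i))"
    using assms by (simp add: mat_tr_def scalar_prod_def atLeast0LessThan)
  also have "\<dots> = (\<Sum>l<m. \<Sum>i<n. B $$ (l, i) * A $$ (i, l))"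
    by (subst sum.swap) (simp add: mult.commute)
  also have "\<dots> = mat_tr (B * A)"
    using assms by (simp add: mat_tr_def scalar_prod_def atLeast0LessThan)
  finally show ?thesis .
qed

lemma mat_tr_smult: "A \<in> carrier_mat n n \<Longrightarrow> mat_tr (c \<cdot>\<^sub>m A) = c * mat_tr A"
  by (simp add: mat_tr_def sum_distrib_left)

lemma mat_tr_zero [simp]: "mat_tr (0\<^sub>m n n) = 0"
  by (simp add: mat_tr_def)

definition mat_unit :: "nat \<Rightarrow> nat \<Rightarrow> nat \<Rightarrow> 'a::comm_ring_1 mat" where
  "mat_unit n p q = mat n n (\<lambda>(r, s). if r = p \<and> s = q then 1 else 0)"

lemma mat_unit_carrier [simp]: "mat_unit n p q \<in> carrier_mat n n"
  by (simp add: mat_unit_def)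

lemma dim_mat_unit [simp]: "dim_row (mat_unit n p q) = n" "dim_col (mat_unit n p q) = n"
  by (simp_all add: mat_unit_def)

lemma index_mat_unit [simp]:
  "r < n \<Longrightarrow> s < n \<Longrightarrow> mat_unit n p q $$ (r, s) = (if r = p \<and> s = q then 1 else 0)"
  by (simp add: mat_unit_def)

lemma index_mat_unit_mult:
  assumes "M \<in> carrier_mat n m" "r < n" "s < m" "q < n"
  shows "(mat_unit n p q * M) $$ (r, s) = (if r = p then M $$ (q, s) else 0)"
  using assms by (simp add: scalar_prod_def atLeast0LessThan if_distrib[of "\<lambda>x. x * _"] cong: if_cong)

lemma index_mult_mat_unit:
  assumes "M \<in> carrier_mat m n" "r < m" "s < n" "p < n"
  shows "(M * mat_unit n p q) $$ (r, s) = (if s = q then M $$ (r, p) else 0)"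
  using assms by (simp add: scalar_prod_def atLeast0LessThan if_distrib[of "\<lambda>x. _ * x"] cong: if_cong)

lemma mat_tr_mat_unit_mult:
  assumes "M \<in> carrier_mat n n" "p < n" "q < n"
  shows "mat_tr (mat_unit n p q * M) = M $$ (q, p)"
proof -
  have "mat_tr (mat_unit n p q * M) = (\<Sum>r<n. if r = p then M $$ (q, r) else 0)"
    unfolding mat_tr_def using assms by (intro sum.cong) (auto simp: index_mat_unit_mult simp del: index_mult_mat(1))
  then show ?thesis
    using assms by simp
qed

lemma smult_smult_mat: "a \<cdot>\<^sub>m (b \<cdot>\<^sub>m A) = (a * b :: 'a::semigroup_mult) \<cdot>\<^sub>m A"
  by (rule eq_matI) (simp_all add: mult.assoc)

lemma smult_one_mat_mult:
  "(a \<cdot>\<^sub>m 1\<^sub>m n) * (b \<cdot>\<^sub>m 1\<^sub>m n) = ((a::'a::comm_ring_1) * b) \<cdot>\<^sub>m 1\<^sub>m n"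
proof -
  have "(a \<cdot>\<^sub>m 1\<^sub>m n) * (b \<cdot>\<^sub>m 1\<^sub>m n) = a \<cdot>\<^sub>m (b \<cdot>\<^sub>m 1\<^sub>m n :: 'a mat)"
    by (simp add: mult_smult_assoc_mat[of _ n n _ n])
  also have "\<dots> = (a * b) \<cdot>\<^sub>m 1\<^sub>m n"
    by (rule eq_matI) auto
  finally show ?thesis .
qed

section \<open>Block-diagonal matrices\<close>

lemma blk_carrier_length: "a \<in> blk_carrier ds \<Longrightarrow> length a = length ds"
  by (simp add: blk_carrier_def)

lemma blk_carrier_nth:
  "a \<in> blk_carrier ds \<Longrightarrow> i < length ds \<Longrightarrow> a ! i \<in> carrier_mat (ds ! i) (ds ! i)"
  by (simp add: blk_carrier_def)

lemma blk_mult_carrier [simp]: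
  "a \<in> blk_carrier ds \<Longrightarrow> b \<in> blk_carrier ds \<Longrightarrow> blk_mult a b \<in> blk_carrier ds"
  by (auto simp: blk_carrier_def blk_mult_def)

lemma blk_add_carrier [simp]:
  "a \<in> blk_carrier ds \<Longrightarrow> b \<in> blk_carrier ds \<Longrightarrow> blk_add a b \<in> blk_carrier ds"
  by (auto simp: blk_carrier_def blk_add_def)

lemma blk_smult_carrier [simp]: "a \<in> blk_carrier ds \<Longrightarrow> blk_smult c a \<in> blk_carrier ds"
  by (auto simp: blk_carrier_def blk_smult_def)

lemma blk_one_carrier [simp]: "blk_one ds \<in> blk_carrier ds"
  by (auto simp: blk_carrier_def blk_one_def)

lemma blk_zero_carrier [simp]: "blk_zero ds \<in> blk_carrier ds"
  by (auto simp: blk_carrier_def blk_zero_def)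

lemma blk_mult_nth:
  "a \<in> blk_carrier ds \<Longrightarrow> b \<in> blk_carrier ds \<Longrightarrow> i < length ds \<Longrightarrow>
    blk_mult a b ! i = a ! i * b ! i"
  by (simp add: blk_carrier_def blk_mult_def)

lemma blk_add_nth:
  "a \<in> blk_carrier ds \<Longrightarrow> b \<in> blk_carrier ds \<Longrightarrow> i < length ds \<Longrightarrow>
    blk_add a b ! i = a ! i + b ! i"
  by (simp add: blk_carrier_def blk_add_def)

lemma blk_smult_nth: "i < length a \<Longrightarrow> blk_smult c a ! i = c \<cdot>\<^sub>m a ! i"
  by (simp add: blk_smult_def)

lemma blk_one_nth [simp]: "i < length ds \<Longrightarrow> blk_one ds ! i = 1\<^sub>m (ds ! i)"
  by (simp add: blk_one_def)

lemma blk_eqI: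
  assumes "a \<in> blk_carrier ds" "b \<in> blk_carrier ds"
    and "\<And>i p r. i < length ds \<Longrightarrow> p < ds ! i \<Longrightarrow> r < ds ! i \<Longrightarrow>
      a ! i $$ (p, r) = b ! i $$ (p, r)"
  shows "a = b"
proof (rule nth_equalityI)
  show "length a = length b"
    using assms(1,2) by (simp add: blk_carrier_length)
  fix i assume "i < length a"
  then have i: "i < length ds"
    using assms(1) by (simp add: blk_carrier_length)
  have "a ! i \<in> carrier_mat (ds ! i) (ds ! i)" "b ! i \<in> carrier_mat (ds ! i) (ds ! i)"
    using assms(1,2) i by (simp_all add: blk_carrier_nth)
  then show "a ! i = b ! i"
    using assms(3)[OF i] by (intro eq_matI) auto
qed

lemma blk_sum_carrier [simp]: "set xs \<subseteq> blk_carrier ds \<Longrightarrow> blk_sum ds xs \<in> blk_carrier ds"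
  by (induction xs) (simp_all add: blk_sum_def)

lemma index_blk_sum:
  assumes "set xs \<subseteq> blk_carrier ds" "i < length ds" "p < ds ! i" "r < ds ! i"
  shows "blk_sum ds xs ! i $$ (p, r) = (\<Sum>x\<leftarrow>xs. x ! i $$ (p, r))"
  using assms(1)
proof (induction xs)
  case Nil
  then show ?case
    using assms(2-4) by (simp add: blk_sum_def blk_zero_def)
next
  case (Cons x xs)
  then have x: "x \<in> blk_carrier ds" and xs: "set xs \<subseteq> blk_carrier ds"
    by simp_all
  have "blk_sum ds (x # xs) ! i = x ! i + blk_sum ds xs ! i"
    using blk_add_nth[OF x blk_sum_carrier[OF xs] assms(2)] by (simp add: blk_sum_def)
  then show ?case
    using Cons.IH[OF xs] assms(2-4) blk_carrier_nth[OF x assms(2)]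
      blk_carrier_nth[OF blk_sum_carrier[OF xs] assms(2)]
    by simp
qed

definition blk_single :: "nat list \<Rightarrow> nat \<Rightarrow> 'a::comm_ring_1 mat \<Rightarrow> 'a mat list" where
  "blk_single ds i M = map (\<lambda>j. if j = i then M else 0\<^sub>m (ds ! j) (ds ! j)) [0..<length ds]"

lemma blk_single_carrier [simp]:
  "i < length ds \<Longrightarrow> M \<in> carrier_mat (ds ! i) (ds ! i) \<Longrightarrow> blk_single ds i M \<in> blk_carrier ds"
  by (auto simp: blk_carrier_def blk_single_def)

lemma blk_single_nth:
  "j < length ds \<Longrightarrow> blk_single ds i M ! j = (if j = i then M else 0\<^sub>m (ds ! j) (ds ! j))"
  by (simp add: blk_single_def)

lemma blk_smult_blk_single: "blk_smult c (blk_single ds i M) = blk_single ds i (c \<cdot>\<^sub>m M)"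
  by (simp add: blk_smult_def blk_single_def)

definition blk_indices :: "nat list \<Rightarrow> (nat \<times> nat \<times> nat) list" where
  "blk_indices ds = [(i, p, q). i \<leftarrow> [0..<length ds], p \<leftarrow> [0..<ds ! i], q \<leftarrow> [0..<ds ! i]]"

lemma set_blk_indices:
  "(i, p, q) \<in> set (blk_indices ds) \<longleftrightarrow> i < length ds \<and> p < ds ! i \<and> q < ds ! i"
  by (force simp: blk_indices_def)

lemma sum_list_blk_indices:
  "(\<Sum>x\<leftarrow>blk_indices ds. f x) = (\<Sum>i<length ds. \<Sum>p<ds ! i. \<Sum>q<ds ! i. f (i, p, q))"
  by (simp add: blk_indices_def sum_list_concat_map o_def interv_sum_list_conv_sum_set_nat
      atLeast0LessThan)

lemma index_blk_sum_blk_single: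
  assumes F: "\<And>i p q. i < length ds \<Longrightarrow> p < ds ! i \<Longrightarrow> q < ds ! i \<Longrightarrow>
      F i p q \<in> carrier_mat (ds ! i) (ds ! i)"
    and j: "j < length ds" and s: "s < ds ! j" and t: "t < ds ! j"
  shows "blk_sum ds (map (\<lambda>(i, p, q). blk_single ds i (F i p q)) (blk_indices ds)) ! j $$ (s, t)
    = (\<Sum>p<ds ! j. \<Sum>q<ds ! j. F j p q $$ (s, t))"
proof -
  have carrier: "set (map (\<lambda>(i, p, q). blk_single ds i (F i p q)) (blk_indices ds)) \<subseteq> blk_carrier ds"
    using F by (auto simp: set_blk_indices)
  have "blk_sum ds (map (\<lambda>(i, p, q). blk_single ds i (F i p q)) (blk_indices ds)) ! j $$ (s, t)
      = (\<Sum>i<length ds. \<Sum>p<ds ! i. \<Sum>q<ds ! i. blk_single ds i (F i p q) ! j $$ (s, t))"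
    by (simp add: index_blk_sum[OF carrier j s t] sum_list_blk_indices o_def)
  also have "\<dots> = (\<Sum>i<length ds. if i = j then \<Sum>p<ds ! j. \<Sum>q<ds ! j. F j p q $$ (s, t) else 0)"
    using j s t by (intro sum.cong) (auto simp: blk_single_nth)
  finally show ?thesis
    using j by simp
qed

definition blk_scalar :: "nat list \<Rightarrow> (nat \<Rightarrow> 'a::comm_ring_1) \<Rightarrow> 'a mat list" where
  "blk_scalar ds c = map (\<lambda>i. c i \<cdot>\<^sub>m 1\<^sub>m (ds ! i)) [0..<length ds]"

lemma blk_scalar_carrier [simp]: "blk_scalar ds c \<in> blk_carrier ds"
  by (simp add: blk_carrier_def blk_scalar_def)

lemma blk_scalar_nth: "i < length ds \<Longrightarrow> blk_scalar ds c ! i = c i \<cdot>\<^sub>m 1\<^sub>m (ds ! i)"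
  by (simp add: blk_scalar_def)

lemma blk_pow_blk_scalar: "blk_pow ds (blk_scalar ds c) j = blk_scalar ds (\<lambda>i. c i ^ j)"
proof (induction j)
  case 0
  show ?case
    by (intro nth_equalityI) (auto simp: blk_pow_def blk_scalar_def blk_one_def)
next
  case (Suc j)
  have "blk_pow ds (blk_scalar ds c) (Suc j) = blk_mult (blk_scalar ds c) (blk_scalar ds (\<lambda>i. c i ^ j))"
    using Suc.IH by (simp add: blk_pow_def)
  also have "\<dots> = blk_scalar ds (\<lambda>i. c i ^ Suc j)"
    by (intro nth_equalityI) (simp_all add: blk_mult_def blk_scalar_def smult_one_mat_mult)
  finally show ?case .
qed

lemma blk_scalar_eq_blk_smult_one_iff:
  assumes "0 \<notin> set ds"
  shows "blk_scalar ds c = blk_smult lam (blk_one ds) \<longleftrightarrow> (\<forall>i<length ds. c i = lam)"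
proof
  assume eq: "blk_scalar ds c = blk_smult lam (blk_one ds)"
  show "\<forall>i<length ds. c i = lam"
  proof (intro allI impI)
    fix i assume i: "i < length ds"
    then have "0 < ds ! i"
      using assms by (metis gr0I nth_mem)
    then have "c i = blk_scalar ds c ! i $$ (0, 0)"
      using i by (simp add: blk_scalar_nth)
    also have "\<dots> = lam"
      unfolding eq using i \<open>0 < ds ! i\<close> by (simp add: blk_smult_def blk_one_def)
    finally show "c i = lam" .
  qed
next
  assume "\<forall>i<length ds. c i = lam"
  then show "blk_scalar ds c = blk_smult lam (blk_one ds)"
    by (intro nth_equalityI) (simp_all add: blk_scalar_def blk_smult_def blk_one_def)
qed

lemma copairing_ell_carrier:
  "\<forall>(x, y)\<in>set g. x \<in> blk_carrier ds \<and> y \<in> blk_carrier ds \<Longrightarrow> copairing_ell ds g \<in> blk_carrier ds"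
  unfolding copairing_ell_def by (fastforce intro!: blk_sum_carrier blk_mult_carrier)

lemma index_copairing_ell:
  assumes g: "\<forall>(x, y)\<in>set g. x \<in> blk_carrier ds \<and> y \<in> blk_carrier ds"
    and i: "i < length ds" and p: "p < ds ! i" and r: "r < ds ! i"
  shows "copairing_ell ds g ! i $$ (p, r)
    = (\<Sum>(x, y)\<leftarrow>g. \<Sum>q<ds ! i. x ! i $$ (p, q) * y ! i $$ (q, r))"
proof -
  have pair: "blk_mult x y ! i $$ (p, r) = (\<Sum>q<ds ! i. x ! i $$ (p, q) * y ! i $$ (q, r))"
    if "(x, y) \<in> set g" for x y
  proof -
    have x: "x \<in> blk_carrier ds" and y: "y \<in> blk_carrier ds"
      using g that by auto
    show ?thesis
      unfolding blk_mult_nth[OF x y i]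
      by (rule index_mult_mat_sum[OF blk_carrier_nth[OF x i] blk_carrier_nth[OF y i] p r])
  qed
  have "copairing_ell ds g ! i $$ (p, r) = (\<Sum>(x, y)\<leftarrow>g. blk_mult x y ! i $$ (p, r))"
    unfolding copairing_ell_def using g i p r
    by (subst index_blk_sum) (auto simp: o_def case_prod_unfold)
  also have "\<dots> = (\<Sum>(x, y)\<leftarrow>g. \<Sum>q<ds ! i. x ! i $$ (p, q) * y ! i $$ (q, r))"
    by (intro arg_cong[where f = sum_list] map_cong) (auto simp: pair)
  finally show ?thesis .
qed

lemma is_copairing_index_left:
  assumes g: "is_copairing ds B g" and a: "a \<in> blk_carrier ds"
    and i: "i < length ds" and q: "q < ds ! i" and r: "r < ds ! i"
  shows "(\<Sum>(x, y)\<leftarrow>g. B a x * y ! i $$ (q, r)) = a ! i $$ (q, r)"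
proof -
  have y: "y \<in> blk_carrier ds" if "(x, y) \<in> set g" for x y
    using g that by (auto simp: is_copairing_def)
  have pair: "blk_smult c y ! i $$ (q, r) = c * y ! i $$ (q, r)" if "(x, y) \<in> set g" for c x y
    using blk_carrier_nth[OF y[OF that] i] y[OF that] i q r by (simp add: blk_smult_nth blk_carrier_length)
  have "(\<Sum>(x, y)\<leftarrow>g. B a x * y ! i $$ (q, r))
      = (\<Sum>(x, y)\<leftarrow>g. blk_smult (B a x) y ! i $$ (q, r))"
    by (intro arg_cong[where f = sum_list] map_cong) (auto simp: pair)
  also have "\<dots> = blk_sum ds (map (\<lambda>(x, y). blk_smult (B a x) y) g) ! i $$ (q, r)"
    using y i q r by (subst index_blk_sum) (auto simp: o_def case_prod_unfold)
  also have "\<dots> = a ! i $$ (q, r)"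
    using g a by (simp add: is_copairing_def)
  finally show ?thesis .
qed

section \<open>The twisted form and its dual elements\<close>

lemma twisted_form_eq:
  assumes "u \<in> blk_carrier ds" "a \<in> blk_carrier ds" "b \<in> blk_carrier ds"
  shows "twisted_form ds u a b = (\<Sum>i<length ds. of_nat (ds ! i) * mat_tr (u ! i * (a ! i * b ! i)))"
  unfolding twisted_form_def eps0_def using assms by (intro sum.cong) (simp_all add: blk_mult_nth)

lemma twisted_form_blk_single_left:
  assumes u: "u \<in> blk_carrier ds" and x: "x \<in> blk_carrier ds"
    and i: "i < length ds" and M: "M \<in> carrier_mat (ds ! i) (ds ! i)"
  shows "twisted_form ds u (blk_single ds i M) x = of_nat (ds ! i) * mat_tr (u ! i * (M * x ! i))"
proof -
  have "of_nat (ds ! j) * mat_tr (u ! j * (blk_single ds i M ! j * x ! j))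
      = (if j = i then of_nat (ds ! i) * mat_tr (u ! i * (M * x ! i)) else 0)" if j: "j < length ds" for j
    using blk_carrier_nth[OF u j] blk_carrier_nth[OF x j] j by (simp add: blk_single_nth)
  then have "twisted_form ds u (blk_single ds i M) x
      = (\<Sum>j<length ds. if j = i then of_nat (ds ! i) * mat_tr (u ! i * (M * x ! i)) else 0)"
    unfolding twisted_form_eq[OF u blk_single_carrier[OF i M] x] by (intro sum.cong) auto
  then show ?thesis
    using i by simp
qed

lemma twisted_form_blk_single_right:
  assumes u: "u \<in> blk_carrier ds" and x: "x \<in> blk_carrier ds"
    and i: "i < length ds" and M: "M \<in> carrier_mat (ds ! i) (ds ! i)"
  shows "twisted_form ds u x (blk_single ds i M) = of_nat (ds ! i) * mat_tr (u ! i * (x ! i * M))"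
proof -
  have "of_nat (ds ! j) * mat_tr (u ! j * (x ! j * blk_single ds i M ! j))
      = (if j = i then of_nat (ds ! i) * mat_tr (u ! i * (x ! i * M)) else 0)" if j: "j < length ds" for j
    using blk_carrier_nth[OF u j] blk_carrier_nth[OF x j] j by (simp add: blk_single_nth)
  then have "twisted_form ds u x (blk_single ds i M)
      = (\<Sum>j<length ds. if j = i then of_nat (ds ! i) * mat_tr (u ! i * (x ! i * M)) else 0)"
    unfolding twisted_form_eq[OF u x blk_single_carrier[OF i M]] by (intro sum.cong) auto
  then show ?thesis
    using i by simp
qed

lemma twisted_form_one_blk_scalar:
  assumes u: "u \<in> blk_carrier ds"
  shows "twisted_form ds u (blk_one ds) (blk_scalar ds c)
    = (\<Sum>i<length ds. of_nat (ds ! i) * mat_tr (u ! i) * c i)"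
  unfolding twisted_form_eq[OF u blk_one_carrier blk_scalar_carrier]
proof (intro sum.cong refl)
  fix i assume "i \<in> {..<length ds}"
  then have i: "i < length ds" and U: "u ! i \<in> carrier_mat (ds ! i) (ds ! i)"
    using u by (simp_all add: blk_carrier_nth)
  have "u ! i * (1\<^sub>m (ds ! i) * (c i \<cdot>\<^sub>m 1\<^sub>m (ds ! i))) = c i \<cdot>\<^sub>m u ! i"
    using U mult_smult_distrib[OF U one_carrier_mat, of "c i"] by simp
  then show "of_nat (ds ! i) * mat_tr (u ! i * (blk_one ds ! i * blk_scalar ds c ! i))
      = of_nat (ds ! i) * mat_tr (u ! i) * c i"
    using i U by (simp add: blk_scalar_nth mat_tr_smult)
qed

definition blk_dual_left :: "nat list \<Rightarrow> 'a::field mat list \<Rightarrow> nat \<Rightarrow> nat \<Rightarrow> nat \<Rightarrow> 'a mat list" where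
  "blk_dual_left ds v i p q =
    blk_single ds i ((1 / of_nat (ds ! i)) \<cdot>\<^sub>m (v ! i * mat_unit (ds ! i) q p))"

definition blk_dual_right :: "nat list \<Rightarrow> 'a::field mat list \<Rightarrow> nat \<Rightarrow> nat \<Rightarrow> nat \<Rightarrow> 'a mat list" where
  "blk_dual_right ds v i p q =
    blk_single ds i ((1 / of_nat (ds ! i)) \<cdot>\<^sub>m (mat_unit (ds ! i) q p * v ! i))"

lemma blk_dual_left_carrier [simp]:
  assumes "v \<in> blk_carrier ds" "i < length ds"
  shows "blk_dual_left ds v i p q \<in> blk_carrier ds"
  unfolding blk_dual_left_def
  using mult_carrier_mat[OF blk_carrier_nth[OF assms] mat_unit_carrier] assms(2) by simp

lemma blk_dual_right_carrier [simp]: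
  assumes "v \<in> blk_carrier ds" "i < length ds"
  shows "blk_dual_right ds v i p q \<in> blk_carrier ds"
  unfolding blk_dual_right_def
  using mult_carrier_mat[OF mat_unit_carrier blk_carrier_nth[OF assms]] assms(2) by simp

definition twisted_copairing :: "nat list \<Rightarrow> 'a::field mat list \<Rightarrow> ('a mat list \<times> 'a mat list) list" where
  "twisted_copairing ds v = map (\<lambda>(i, p, q).
     (blk_dual_right ds v i p q, blk_single ds i (mat_unit (ds ! i) p q))) (blk_indices ds)"

context
  fixes ds :: "nat list" and u v :: "'a::field mat list"
  assumes dims_nonzero: "\<forall>d \<in> set ds. (of_nat d :: 'a) \<noteq> 0"
    and u_carrier: "u \<in> blk_carrier ds" and v_carrier: "v \<in> blk_carrier ds"
    and u_v: "blk_mult u v = blk_one ds" and v_u: "blk_mult v u = blk_one ds"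
begin

lemma u_v_nth: "i < length ds \<Longrightarrow> u ! i * v ! i = 1\<^sub>m (ds ! i)"
  using arg_cong[OF u_v, of "\<lambda>a. a ! i"] by (simp add: blk_mult_nth[OF u_carrier v_carrier])

lemma v_u_nth: "i < length ds \<Longrightarrow> v ! i * u ! i = 1\<^sub>m (ds ! i)"
  using arg_cong[OF v_u, of "\<lambda>a. a ! i"] by (simp add: blk_mult_nth[OF v_carrier u_carrier])

lemma twisted_form_blk_dual_left:
  assumes x: "x \<in> blk_carrier ds" and i: "i < length ds" and p: "p < ds ! i" and q: "q < ds ! i"
  shows "twisted_form ds u (blk_dual_left ds v i p q) x = x ! i $$ (p, q)"
proof -
  let ?d = "ds ! i" and ?c = "1 / of_nat (ds ! i) :: 'a" and ?E = "mat_unit (ds ! i) q p :: 'a mat"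
  have U: "u ! i \<in> carrier_mat ?d ?d" and V: "v ! i \<in> carrier_mat ?d ?d"
    and X: "x ! i \<in> carrier_mat ?d ?d"
    using u_carrier v_carrier x i by (simp_all add: blk_carrier_nth)
  have VE: "v ! i * ?E \<in> carrier_mat ?d ?d" and EX: "?E * x ! i \<in> carrier_mat ?d ?d"
    using mult_carrier_mat[OF V mat_unit_carrier] mult_carrier_mat[OF mat_unit_carrier X] by simp_all
  have "u ! i * (v ! i * ?E * x ! i) = u ! i * v ! i * (?E * x ! i)"
    using assoc_mult_mat[OF V mat_unit_carrier X] assoc_mult_mat[OF U V mult_carrier_mat[OF mat_unit_carrier X]]
    by simp
  also have "\<dots> = ?E * x ! i"
    using u_v_nth[OF i] X by simp
  finally have "u ! i * (?c \<cdot>\<^sub>m (v ! i * ?E) * x ! i) = ?c \<cdot>\<^sub>m (?E * x ! i)"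
    using mult_smult_assoc_mat[OF VE X] mult_smult_distrib[OF U mult_carrier_mat[OF VE X]] by simp
  then have "twisted_form ds u (blk_dual_left ds v i p q) x = of_nat ?d * (?c * mat_tr (?E * x ! i))"
    unfolding blk_dual_left_def using twisted_form_blk_single_left[OF u_carrier x i] VE
    by (simp add: mat_tr_smult[OF EX])
  also have "\<dots> = x ! i $$ (p, q)"
    using dims_nonzero i p q X by (simp add: mat_tr_mat_unit_mult)
  finally show ?thesis .
qed

lemma twisted_form_blk_dual_right:
  assumes x: "x \<in> blk_carrier ds" and i: "i < length ds" and p: "p < ds ! i" and q: "q < ds ! i"
  shows "twisted_form ds u x (blk_dual_right ds v i p q) = x ! i $$ (p, q)"
proof -
  let ?d = "ds ! i" and ?c = "1 / of_nat (ds ! i) :: 'a" and ?E = "mat_unit (ds ! i) q p :: 'a mat"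
  have U: "u ! i \<in> carrier_mat ?d ?d" and V: "v ! i \<in> carrier_mat ?d ?d"
    and X: "x ! i \<in> carrier_mat ?d ?d"
    using u_carrier v_carrier x i by (simp_all add: blk_carrier_nth)
  have XE: "x ! i * ?E \<in> carrier_mat ?d ?d" and EV: "?E * v ! i \<in> carrier_mat ?d ?d"
    using mult_carrier_mat[OF X mat_unit_carrier] mult_carrier_mat[OF mat_unit_carrier V] by simp_all
  have UXE: "u ! i * (x ! i * ?E) \<in> carrier_mat ?d ?d" and XEV: "x ! i * (?E * v ! i) \<in> carrier_mat ?d ?d"
    using mult_carrier_mat[OF U XE] mult_carrier_mat[OF X EV] by simp_all
  have "mat_tr (u ! i * (x ! i * (?E * v ! i))) = mat_tr (u ! i * (x ! i * ?E) * v ! i)"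
    using assoc_mult_mat[OF U XE V] assoc_mult_mat[OF X mat_unit_carrier V] by simp
  also have "\<dots> = mat_tr (v ! i * (u ! i * (x ! i * ?E)))"
    by (rule mat_tr_mult_comm[OF UXE V])
  also have "\<dots> = mat_tr (v ! i * u ! i * (x ! i * ?E))"
    using assoc_mult_mat[OF V U XE] by simp
  also have "\<dots> = mat_tr (x ! i * ?E)"
    using v_u_nth[OF i] X by simp
  also have "\<dots> = x ! i $$ (p, q)"
    using mat_tr_mult_comm[OF X mat_unit_carrier] X p q by (simp add: mat_tr_mat_unit_mult)
  finally have tr: "mat_tr (u ! i * (x ! i * (?E * v ! i))) = x ! i $$ (p, q)" .
  have "u ! i * (x ! i * (?c \<cdot>\<^sub>m (?E * v ! i))) = ?c \<cdot>\<^sub>m (u ! i * (x ! i * (?E * v ! i)))"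
    using mult_smult_distrib[OF X EV] mult_smult_distrib[OF U XEV] by simp
  then show ?thesis
    unfolding blk_dual_right_def using twisted_form_blk_single_right[OF u_carrier x i] EV dims_nonzero i
    by (simp add: mat_tr_smult[OF mult_carrier_mat[OF U XEV]] tr)
qed

lemma twisted_form_blk_single_mat_unit:
  assumes a: "a \<in> blk_carrier ds" and i: "i < length ds" and p: "p < ds ! i" and q: "q < ds ! i"
  shows "twisted_form ds u (blk_single ds i (mat_unit (ds ! i) p q)) a
    = of_nat (ds ! i) * (a ! i * u ! i) $$ (q, p)"
proof -
  let ?d = "ds ! i" and ?E = "mat_unit (ds ! i) p q :: 'a mat"
  have U: "u ! i \<in> carrier_mat ?d ?d" and A: "a ! i \<in> carrier_mat ?d ?d"
    using u_carrier a i by (simp_all add: blk_carrier_nth)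
  have "mat_tr (u ! i * (?E * a ! i)) = mat_tr (?E * a ! i * u ! i)"
    using mat_tr_mult_comm[OF U mult_carrier_mat[OF mat_unit_carrier A]] .
  also have "\<dots> = (a ! i * u ! i) $$ (q, p)"
    using assoc_mult_mat[OF mat_unit_carrier A U] mult_carrier_mat[OF A U] p q
    by (simp add: mat_tr_mat_unit_mult)
  finally show ?thesis
    using twisted_form_blk_single_left[OF u_carrier a i mat_unit_carrier] by simp
qed

lemma copairing_ell_twisted_form:
  assumes g: "is_copairing ds (twisted_form ds u) g"
  shows "copairing_ell ds g = blk_scalar ds (\<lambda>i. mat_tr (v ! i) / of_nat (ds ! i))"
proof (rule blk_eqI)
  have g_carrier: "\<forall>(x, y)\<in>set g. x \<in> blk_carrier ds \<and> y \<in> blk_carrier ds"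
    using g by (simp add: is_copairing_def)
  then show "copairing_ell ds g \<in> blk_carrier ds"
    by (rule copairing_ell_carrier)
  fix i p r assume i: "i < length ds" and p: "p < ds ! i" and r: "r < ds ! i"
  let ?h = "\<lambda>q. blk_dual_left ds v i p q"
  have "copairing_ell ds g ! i $$ (p, r)
      = (\<Sum>(x, y)\<leftarrow>g. \<Sum>q<ds ! i. twisted_form ds u (?h q) x * y ! i $$ (q, r))"
    unfolding index_copairing_ell[OF g_carrier i p r] using g_carrier i p
    by (intro arg_cong[where f = sum_list] map_cong) (auto simp: twisted_form_blk_dual_left)
  also have "\<dots> = (\<Sum>q<ds ! i. \<Sum>(x, y)\<leftarrow>g. twisted_form ds u (?h q) x * y ! i $$ (q, r))"
    by (simp add: case_prod_unfold sum_list_sum_swap)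
  also have "\<dots> = (\<Sum>q<ds ! i. ?h q ! i $$ (q, r))"
    using is_copairing_index_left[OF g blk_dual_left_carrier[OF v_carrier i] i _ r] by simp
  also have "\<dots> = blk_scalar ds (\<lambda>i. mat_tr (v ! i) / of_nat (ds ! i)) ! i $$ (p, r)"
    using blk_carrier_nth[OF v_carrier i] i p r
    by (auto simp: blk_dual_left_def blk_single_nth blk_scalar_nth index_mult_mat_unit mat_tr_def
        sum_divide_distrib simp del: index_mult_mat(1))
  finally show "copairing_ell ds g ! i $$ (p, r)
      = blk_scalar ds (\<lambda>i. mat_tr (v ! i) / of_nat (ds ! i)) ! i $$ (p, r)" .
qed simp

lemma twisted_copairing_left_inverse:
  assumes a: "a \<in> blk_carrier ds"
  shows "blk_sum ds (map (\<lambda>(x, y). blk_smult (twisted_form ds u a x) y) (twisted_copairing ds v)) = a"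
proof -
  let ?L = "\<lambda>(i, p, q). blk_single ds i (a ! i $$ (p, q) \<cdot>\<^sub>m mat_unit (ds ! i) p q)"
  have "map (\<lambda>(x, y). blk_smult (twisted_form ds u a x) y) (twisted_copairing ds v) = map ?L (blk_indices ds)"
    unfolding twisted_copairing_def map_map using a
    by (intro map_cong) (auto simp: set_blk_indices twisted_form_blk_dual_right blk_smult_blk_single)
  also have "blk_sum ds \<dots> = a"
  proof (rule blk_eqI[OF _ a])
    show "blk_sum ds (map ?L (blk_indices ds)) \<in> blk_carrier ds"
      by (auto simp: set_blk_indices intro!: blk_sum_carrier)
    fix j s t assume j: "j < length ds" and s: "s < ds ! j" and t: "t < ds ! j"
    have "blk_sum ds (map ?L (blk_indices ds)) ! j $$ (s, t)
        = (\<Sum>p<ds ! j. \<Sum>q<ds ! j. if s = p \<and> t = q then a ! j $$ (p, q) else 0)"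
      using index_blk_sum_blk_single[where F = "\<lambda>i p q. a ! i $$ (p, q) \<cdot>\<^sub>m mat_unit (ds ! i) p q", OF _ j s t] s t
      by (simp add: if_distrib[of "\<lambda>x. _ * x"] cong: if_cong)
    then show "blk_sum ds (map ?L (blk_indices ds)) ! j $$ (s, t) = a ! j $$ (s, t)"
      using s t by (simp add: sum_delta_pair)
  qed
  finally show ?thesis .
qed

lemma twisted_copairing_right_inverse:
  assumes a: "a \<in> blk_carrier ds"
  shows "blk_sum ds (map (\<lambda>(x, y). blk_smult (twisted_form ds u y a) x) (twisted_copairing ds v)) = a"
proof -
  let ?R = "\<lambda>(i, p, q). blk_single ds i ((a ! i * u ! i) $$ (q, p) \<cdot>\<^sub>m (mat_unit (ds ! i) q p * v ! i))"
  have R_carrier: "(a ! i * u ! i) $$ (q, p) \<cdot>\<^sub>m (mat_unit (ds ! i) q p * v ! i) \<in> carrier_mat (ds ! i) (ds ! i)"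
    if "i < length ds" for i p q
    using mult_carrier_mat[OF mat_unit_carrier blk_carrier_nth[OF v_carrier that]] by simp
  have "map (\<lambda>(x, y). blk_smult (twisted_form ds u y a) x) (twisted_copairing ds v) = map ?R (blk_indices ds)"
    unfolding twisted_copairing_def map_map using a dims_nonzero
    by (intro map_cong) (auto simp: set_blk_indices twisted_form_blk_single_mat_unit blk_smult_blk_single
        blk_dual_right_def smult_smult_mat)
  also have "blk_sum ds \<dots> = a"
  proof (rule blk_eqI[OF _ a])
    show "blk_sum ds (map ?R (blk_indices ds)) \<in> blk_carrier ds"
      using R_carrier by (auto simp: set_blk_indices intro!: blk_sum_carrier)
    fix j s t assume j: "j < length ds" and s: "s < ds ! j" and t: "t < ds ! j"
    have A: "a ! j \<in> carrier_mat (ds ! j) (ds ! j)" and U: "u ! j \<in> carrier_mat (ds ! j) (ds ! j)"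
      and V: "v ! j \<in> carrier_mat (ds ! j) (ds ! j)"
      using a u_carrier v_carrier j by (simp_all add: blk_carrier_nth)
    have "blk_sum ds (map ?R (blk_indices ds)) ! j $$ (s, t)
        = (\<Sum>p<ds ! j. (a ! j * u ! j) $$ (s, p) * v ! j $$ (p, t))"
      using index_blk_sum_blk_single[where F = "\<lambda>i p q. (a ! i * u ! i) $$ (q, p) \<cdot>\<^sub>m (mat_unit (ds ! i) q p * v ! i)",
          OF R_carrier j s t] s t V
      by (simp add: index_mat_unit_mult if_distrib[of "\<lambda>x. _ * x"] cong: if_cong del: index_mult_mat(1))
    also have "\<dots> = (a ! j * u ! j * v ! j) $$ (s, t)"
      by (rule index_mult_mat_sum[OF mult_carrier_mat[OF A U] V s t, symmetric])
    also have "\<dots> = a ! j $$ (s, t)"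
      using A U V u_v_nth[OF j] by simp
    finally show "blk_sum ds (map ?R (blk_indices ds)) ! j $$ (s, t) = a ! j $$ (s, t)" .
  qed
  finally show ?thesis .
qed

lemma is_copairing_twisted_copairing: "is_copairing ds (twisted_form ds u) (twisted_copairing ds v)"
proof -
  have "\<forall>(x, y)\<in>set (twisted_copairing ds v). x \<in> blk_carrier ds \<and> y \<in> blk_carrier ds"
    using v_carrier by (auto simp: twisted_copairing_def set_blk_indices)
  then show ?thesis
    unfolding is_copairing_def using twisted_copairing_left_inverse twisted_copairing_right_inverse by blast
qed

section \<open>F-dimensions\<close>

lemma F_dim_twisted_form:
  assumes "is_copairing ds (twisted_form ds u) g"
  shows "F_dim ds (twisted_form ds u) g j
    = (\<Sum>i<length ds. of_nat (ds ! i) * mat_tr (u ! i) * (mat_tr (v ! i) / of_nat (ds ! i)) ^ j)"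
  unfolding F_dim_def copairing_ell_twisted_form[OF assms] blk_pow_blk_scalar
  by (rule twisted_form_one_blk_scalar[OF u_carrier])

lemma quasispecial_twisted_form_iff:
  assumes "is_copairing ds (twisted_form ds u) g"
  shows "quasispecial ds g lam \<longleftrightarrow> lam \<noteq> 0 \<and> (\<forall>i<length ds. mat_tr (v ! i) / of_nat (ds ! i) = lam)"
proof -
  have "0 \<notin> set ds"
    using dims_nonzero by auto
  then show ?thesis
    unfolding quasispecial_def copairing_ell_twisted_form[OF assms]
    by (simp add: blk_scalar_eq_blk_smult_one_iff)
qed

end

lemma inverse_one_minus_const_fps_X:
  "inverse (1 - fps_const (c::'a::field_char_0) * fps_X) = Abs_fps (\<lambda>n. c ^ n)"
  using one_minus_const_fps_X_neg_power'[of 1 c] by simp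

lemma Abs_fps_sum_geometric:
  fixes a c :: "'i \<Rightarrow> 'a::field_char_0"
  shows "Abs_fps (\<lambda>n. \<Sum>i\<in>I. a i * c i ^ n)
    = (\<Sum>i\<in>I. fps_const (a i) * inverse (1 - fps_const (c i) * fps_X))"
  by (rule fps_ext) (simp add: inverse_one_minus_const_fps_X fps_sum_nth)

theorem mainTheorem4:
  fixes ds :: "nat list" and u v :: "'a::field_char_0 mat list"
  assumes "ds \<noteq> []" and "\<forall>d \<in> set ds. 0 < d"
    and "u \<in> blk_carrier ds" and "v \<in> blk_carrier ds"
    and "blk_mult u v = blk_one ds" and "blk_mult v u = blk_one ds"
  shows "(\<exists>g. is_copairing ds (twisted_form ds u) g) \<and>
    (\<forall>g. is_copairing ds (twisted_form ds u) g \<longrightarrow>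
      F_dim ds (twisted_form ds u) g 1 =
        (\<Sum>i<length ds. mat_tr (u ! i) * mat_tr (v ! i)) \<and>
      F_hilbert ds (twisted_form ds u) g =
        (\<Sum>i<length ds. fps_const (of_nat (ds ! i) * mat_tr (u ! i)) *
           inverse (1 - fps_const (mat_tr (v ! i) / of_nat (ds ! i)) * fps_X)) \<and>
      F_dim ds (twisted_form ds u) g 0 =
        (\<Sum>i<length ds. of_nat (ds ! i) * mat_tr (u ! i)) \<and>
      (\<forall>lam. quasispecial ds g lam \<longleftrightarrow>
         lam \<noteq> 0 \<and> (\<forall>i<length ds. mat_tr (v ! i) / of_nat (ds ! i) = lam)))"
proof (intro conjI allI impI)
  have dims: "\<forall>d \<in> set ds. (of_nat d :: 'a) \<noteq> 0"
    using assms(2) by simp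
  note invertible = dims assms(3-6)
  show "\<exists>g. is_copairing ds (twisted_form ds u) g"
    using is_copairing_twisted_copairing[OF invertible] by blast
  fix g assume g: "is_copairing ds (twisted_form ds u) g"
  note F_dim = F_dim_twisted_form[OF invertible g]
  show "F_dim ds (twisted_form ds u) g 1 = (\<Sum>i<length ds. mat_tr (u ! i) * mat_tr (v ! i))"
    unfolding F_dim using assms(2) nth_mem by (intro sum.cong) fastforce+
  show "F_hilbert ds (twisted_form ds u) g =
      (\<Sum>i<length ds. fps_const (of_nat (ds ! i) * mat_tr (u ! i)) *
         inverse (1 - fps_const (mat_tr (v ! i) / of_nat (ds ! i)) * fps_X))"
    unfolding F_hilbert_def F_dim by (rule Abs_fps_sum_geometric)
  show "F_dim ds (twisted_form ds u) g 0 = (\<Sum>i<length ds. of_nat (ds ! i) * mat_tr (u ! i))"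
    unfolding F_dim by simp
  show "quasispecial ds g lam \<longleftrightarrow> lam \<noteq> 0 \<and> (\<forall>i<length ds. mat_tr (v ! i) / of_nat (ds ! i) = lam)" for lam
    by (rule quasispecial_twisted_form_iff[OF invertible g])
qed

end
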